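(* Let $\Delta>0$, $T\ge1$, $\boldsymbol\mu_1=(\Delta,0)$ and $\boldsymbol\mu_2=(-\Delta,0)$. Consider the Bayesian two-armed Gaussian bandit in which the mean vector $\boldsymbol\mu$ is sampled uniformly from $\{\boldsymbol\mu_1,\boldsymbol\mu_2\}$, and let $a_\ast=\arg\max_{a\in\{1,2\}}\boldsymbol\mu_a$ (a random variable). Suppose additionally that the learner has access to a random element $M$ with mutual information $I(M;a_\ast)\le 1/16$. Then for any policy $\pi$ (which may use $M$), $$BR_T(\pi)\ge \Delta T\left(\frac12-\sqrt{\frac12\left(\frac1{16}+4T\Delta^2\right)}\right),$$ where $BR_T(\pi)=\mathbb{E}_{\boldsymbol\mu\sim\mathrm{Unif}\{\boldsymbol\mu_1,\boldsymbol\mu_2\}}[R_T(\pi,\boldsymbol\mu)]$.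
   Context: In the two-armed Gaussian bandit with means $\boldsymbol\mu=(\boldsymbol\mu_1,\boldsymbol\mu_2)$ (here $\boldsymbol\mu_a$ denotes the mean of arm $a$), at each round $t\in[T]$ the learner pulls an arm $a_t\in\{1,2\}$ and observes a reward drawn from a Gaussian distribution (unit variance) with mean $\boldsymbol\mu_{a_t}$, independently across rounds. $R_T(\pi,\boldsymbol\mu)=\mathbb{E}\big[\sum_{t=1}^T(\max_a\boldsymbol\mu_a-\boldsymbol\mu_{a_t})\big]$ is the expected regret of policy $\pi$ over $T$ rounds in the bandit with means $\boldsymbol\mu$. *)

theory Defs
  imports "HOL-Probability.Probability"
begin

text \<open>Arms are the natural numbers 1 and 2; a mean vector is a function nat => real
  (only its values at 1 and 2 matter).  A history is a function nat => nat * real whose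
  entry i (0-indexed) is the pair (action, observed reward) of round i+1; entries of
  rounds not yet played are the dummy value (0,0).\<close>

definition hist_space :: "(nat \<Rightarrow> nat \<times> real) measure" where
  "hist_space = PiM UNIV (\<lambda>_. count_space UNIV \<Otimes>\<^sub>M borel)"

definition arms_space :: "nat measure" where
  "arms_space = count_space {1, 2}"

text \<open>A (randomised) policy with side information of type 'm: at round t (0-indexed) it
  maps the side information m and the current history to a probability distribution on the
  arms {1,2}.\<close>

type_synonym 'm policy = "nat \<Rightarrow> 'm \<times> (nat \<Rightarrow> nat \<times> real) \<Rightarrow> nat measure"

definition policy_measurable :: "'m measure \<Rightarrow> 'm policy \<Rightarrow> bool" where
  "policy_measurable N \<pi> \<longleftrightarrow>
     (\<forall>t. \<pi> t \<in> N \<Otimes>\<^sub>M hist_space \<rightarrow>\<^sub>M prob_algebra arms_space)"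

fun traj :: "(nat \<Rightarrow> real) \<Rightarrow> 'm policy \<Rightarrow> 'm \<Rightarrow> nat \<Rightarrow> (nat \<Rightarrow> nat \<times> real) measure" where
  "traj mu \<pi> m 0 = return hist_space (\<lambda>_. (0, 0))"
| "traj mu \<pi> m (Suc t) =
     traj mu \<pi> m t \<bind> (\<lambda>h. \<pi> t (m, h) \<bind> (\<lambda>a.
       distr (density lborel (normal_density (mu a) 1)) hist_space (\<lambda>r. h(t := (a, r)))))"

definition cond_regret :: "'m policy \<Rightarrow> (nat \<Rightarrow> real) \<Rightarrow> 'm \<Rightarrow> nat \<Rightarrow> real" where
  "cond_regret \<pi> mu m T =
     (\<integral>h. (\<Sum>t<T. Max (mu ` {1, 2}) - mu (fst (h t))) \<partial>traj mu \<pi> m T)"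

definition best_arm :: "(nat \<Rightarrow> real) \<Rightarrow> nat" where
  "best_arm mu = (ARG_MAX mu a. a \<in> {1, 2})"

definition mu_one :: "real \<Rightarrow> nat \<Rightarrow> real" where
  "mu_one \<Delta> = (\<lambda>a. if a = 1 then \<Delta> else 0)"

definition mu_two :: "real \<Rightarrow> nat \<Rightarrow> real" where
  "mu_two \<Delta> = (\<lambda>a. if a = 1 then - \<Delta> else 0)"

end

theory Submission
  imports Defs
begin

text \<open>Compare the bandit with the zero-mean reference bandit, in which the law of the history
  does not depend on the best arm \<open>a\<^sub>*\<close>. The regret is \<open>\<Delta> T (1 - E F)\<close>, where \<open>F\<close> is the
  fraction of rounds spent on \<open>a\<^sub>*\<close>. By the Donsker--Varadhan formula and the chain rule for
  the Kullback--Leibler divergence, each round costs at most \<open>\<Delta>\<^sup>2/2\<close>, so for every \<open>l > 0\<close>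
  \<open>l E F \<le> T \<Delta>\<^sup>2/2 + E ln E\<^sub>r\<^sub>e\<^sub>f e\<^sup>l\<^sup>F\<close>. A second Donsker--Varadhan step, for the joint law of
  \<open>(M, a\<^sub>*)\<close> against the product of its marginals, bounds the last term by \<open>I(M; a\<^sub>*)\<close> plus the
  logarithm of the same moment generating function averaged over a uniform arm. Under the
  reference law the pull fractions of the two arms add up to 1, so Hoeffding's lemma bounds
  this average by \<open>exp (l/2 + l\<^sup>2/8)\<close>; optimising \<open>l\<close> gives
  \<open>E F \<le> 1/2 + sqrt ((I(M; a\<^sub>*) + T \<Delta>\<^sup>2/2) / 2)\<close>.\<close>

lemma (in prob_space) integrable_abs_le_const:
  fixes f :: "'a \<Rightarrow> real"
  assumes "f \<in> borel_measurable M" "\<And>x. x \<in> space M \<Longrightarrow> \<bar>f x\<bar> \<le> B"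
  shows "integrable M f"
  using assms by (intro integrable_const_bound[where B=B]) (auto intro!: AE_I2)

lemma (in prob_space) abs_integral_le_const:
  fixes f :: "'a \<Rightarrow> real"
  assumes "f \<in> borel_measurable M" "\<And>x. x \<in> space M \<Longrightarrow> \<bar>f x\<bar> \<le> B"
  shows "\<bar>\<integral>x. f x \<partial>M\<bar> \<le> B"
proof -
  have "integrable M f" using assms by (rule integrable_abs_le_const)
  moreover have "AE x in M. - B \<le> f x" "AE x in M. f x \<le> B"
    using assms(2) unfolding abs_le_iff by (auto intro!: AE_I2 simp: minus_le_iff)
  ultimately show ?thesis
    using integral_ge_const[of f "- B"] integral_le_const[of f B] by linarith
qed

lemma (in prob_space) integral_exp_pos:
  fixes f :: "'a \<Rightarrow> real"
  assumes "f \<in> borel_measurable M" "\<And>x. x \<in> space M \<Longrightarrow> \<bar>f x\<bar> \<le> B"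
  shows "0 < (\<integral>x. exp (f x) \<partial>M)"
proof -
  have "\<bar>exp (f x)\<bar> \<le> exp B" if "x \<in> space M" for x
    using assms(2)[OF that] by (simp add: abs_le_iff)
  then have "integrable M (\<lambda>x. exp (f x))"
    using assms(1) by (intro integrable_abs_le_const) auto
  then have "exp (- B) \<le> (\<integral>x. exp (f x) \<partial>M)"
    using assms(2) unfolding abs_le_iff by (intro integral_ge_const AE_I2) (auto simp: minus_le_iff)
  then show ?thesis by (rule less_le_trans[OF exp_gt_zero])
qed

text \<open>By the Donsker--Varadhan formula, \<open>KL_dual_bound P Q K\<close> holds iff \<open>KL(P \<parallel> Q) \<le> K\<close>.
  Only this dual form is used: it needs no densities, it is preserved by pushforwards, and the
  bounds add up under composition with Markov kernels (the chain rule).\<close>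

definition KL_dual_bound :: "'a measure \<Rightarrow> 'a measure \<Rightarrow> real \<Rightarrow> bool" where
  "KL_dual_bound P Q K \<longleftrightarrow> (\<forall>\<phi>. \<phi> \<in> borel_measurable P \<longrightarrow> (\<exists>B. \<forall>x\<in>space P. \<bar>\<phi> x\<bar> \<le> B) \<longrightarrow>
      (\<integral>x. \<phi> x \<partial>P) \<le> K + ln (\<integral>x. exp (\<phi> x) \<partial>Q))"

lemma KL_dual_boundD:
  assumes "KL_dual_bound P Q K" "\<phi> \<in> borel_measurable P" "\<And>x. x \<in> space P \<Longrightarrow> \<bar>\<phi> x\<bar> \<le> B"
  shows "(\<integral>x. \<phi> x \<partial>P) \<le> K + ln (\<integral>x. exp (\<phi> x) \<partial>Q)"
  using assms unfolding KL_dual_bound_def by blast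

lemma KL_dual_bound_mono: "KL_dual_bound P Q K \<Longrightarrow> K \<le> K' \<Longrightarrow> KL_dual_bound P Q K'"
  unfolding KL_dual_bound_def by force

text \<open>Fenchel--Young inequality for the conjugate pair \<open>\<rho> ln \<rho> - \<rho>\<close> and \<open>exp\<close>.\<close>

lemma mult_le_entropy_plus_exp:
  fixes \<rho> y :: real
  assumes "0 \<le> \<rho>"
  shows "\<rho> * y \<le> \<rho> * ln \<rho> - \<rho> + exp y"
proof (cases "\<rho> = 0")
  case False
  then have \<rho>: "0 < \<rho>" using assms by simp
  have "y - ln \<rho> + 1 \<le> exp (y - ln \<rho>)" using exp_ge_add_one_self[of "y - ln \<rho>"] by linarith
  also have "exp (y - ln \<rho>) = exp y / \<rho>" using \<rho> by (simp add: exp_diff)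
  finally have "\<rho> * (y - ln \<rho> + 1) \<le> \<rho> * (exp y / \<rho>)" using \<rho> by (intro mult_left_mono) auto
  then show ?thesis using \<rho> by (simp add: algebra_simps)
qed simp

lemma KL_dual_bound_density:
  fixes \<rho> :: "'a \<Rightarrow> real"
  assumes Q: "prob_space Q" and \<rho>[measurable]: "\<rho> \<in> borel_measurable Q"
    and nonneg: "\<And>x. x \<in> space Q \<Longrightarrow> 0 \<le> \<rho> x"
    and int_\<rho>: "integrable Q \<rho>" and total: "(\<integral>x. \<rho> x \<partial>Q) = 1"
    and int_entropy: "integrable Q (\<lambda>x. \<rho> x * ln (\<rho> x))"
  shows "KL_dual_bound (density Q \<rho>) Q (\<integral>x. \<rho> x * ln (\<rho> x) \<partial>Q)"
  unfolding KL_dual_bound_def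
proof (intro allI impI)
  interpret Q: prob_space Q by fact
  fix \<phi> :: "'a \<Rightarrow> real"
  assume "\<phi> \<in> borel_measurable (density Q \<rho>)"
    and "\<exists>B. \<forall>x\<in>space (density Q \<rho>). \<bar>\<phi> x\<bar> \<le> B"
  then have \<phi>[measurable]: "\<phi> \<in> borel_measurable Q" and "\<exists>B. \<forall>x\<in>space Q. \<bar>\<phi> x\<bar> \<le> B"
    by auto
  then obtain B where B: "\<And>x. x \<in> space Q \<Longrightarrow> \<bar>\<phi> x\<bar> \<le> B" by blast
  define E where "E = (\<integral>x. exp (\<phi> x) \<partial>Q)"
  have E: "0 < E" unfolding E_def using B by (intro Q.integral_exp_pos) auto
  have int_exp: "integrable Q (\<lambda>x. exp (\<phi> x))"
    using B by (intro Q.integrable_abs_le_const[where B="exp B"]) (auto simp: abs_le_iff)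
  have "\<bar>\<rho> x * \<phi> x\<bar> \<le> \<bar>B * \<rho> x\<bar>" if "x \<in> space Q" for x
    using mult_right_mono[OF B[OF that] nonneg[OF that]] nonneg[OF that]
      order_trans[OF abs_ge_zero B[OF that]]
    by (simp add: abs_mult mult.commute)
  then have int_\<rho>\<phi>: "integrable Q (\<lambda>x. \<rho> x * \<phi> x)"
    by (intro Bochner_Integration.integrable_bound[OF integrable_mult_right[OF int_\<rho>, of B]] AE_I2) auto
  have "(\<integral>x. \<phi> x \<partial>density Q \<rho>) - ln E = (\<integral>x. \<rho> x * (\<phi> x - ln E) \<partial>Q)"
    using int_\<rho> int_\<rho>\<phi> nonneg by (simp add: integral_density AE_I2 total right_diff_distrib)
  also have "\<dots> \<le> (\<integral>x. \<rho> x * ln (\<rho> x) - \<rho> x + exp (\<phi> x) / E \<partial>Q)"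
  proof (intro integral_mono)
    fix x assume "x \<in> space Q"
    from mult_le_entropy_plus_exp[OF nonneg[OF this], of "\<phi> x - ln E"]
    show "\<rho> x * (\<phi> x - ln E) \<le> \<rho> x * ln (\<rho> x) - \<rho> x + exp (\<phi> x) / E"
      using E by (simp add: exp_diff)
  qed (use int_\<rho> int_\<rho>\<phi> int_entropy int_exp in \<open>auto simp: right_diff_distrib\<close>)
  also have "\<dots> = (\<integral>x. \<rho> x * ln (\<rho> x) \<partial>Q)"
    using int_\<rho> int_entropy int_exp E by (simp add: total E_def)
  finally show "(\<integral>x. \<phi> x \<partial>density Q \<rho>) \<le> (\<integral>x. \<rho> x * ln (\<rho> x) \<partial>Q) + ln E" by simp
qed

lemma KL_dual_bound_refl:
  assumes "prob_space Q"
  shows "KL_dual_bound Q Q 0"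
proof -
  interpret prob_space Q by fact
  show ?thesis
    using KL_dual_bound_density[of Q "\<lambda>_. 1"] by (simp add: density_1 prob_space_axioms prob_space)
qed

lemma KL_dual_bound_distr:
  assumes bound: "KL_dual_bound P Q K" and sets_eq: "sets Q = sets P" and f[measurable]: "f \<in> P \<rightarrow>\<^sub>M X"
  shows "KL_dual_bound (distr P X f) (distr Q X f) K"
  unfolding KL_dual_bound_def
proof (intro allI impI)
  fix \<phi> :: "_ \<Rightarrow> real"
  assume "\<phi> \<in> borel_measurable (distr P X f)" and "\<exists>B. \<forall>x\<in>space (distr P X f). \<bar>\<phi> x\<bar> \<le> B"
  then have [measurable]: "\<phi> \<in> borel_measurable X" and "\<exists>B. \<forall>x\<in>space X. \<bar>\<phi> x\<bar> \<le> B" by auto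
  then obtain B where B: "\<And>x. x \<in> space X \<Longrightarrow> \<bar>\<phi> x\<bar> \<le> B" by blast
  have [measurable]: "f \<in> Q \<rightarrow>\<^sub>M X" using f sets_eq by (simp cong: measurable_cong_sets)
  have "(\<integral>x. \<phi> (f x) \<partial>P) \<le> K + ln (\<integral>x. exp (\<phi> (f x)) \<partial>Q)"
    using B measurable_space[OF f] by (intro KL_dual_boundD[OF bound]) auto
  then show "(\<integral>x. \<phi> x \<partial>distr P X f) \<le> K + ln (\<integral>x. exp (\<phi> x) \<partial>distr Q X f)"
    by (simp add: integral_distr)
qed

text \<open>The chain rule: \<open>\<psi> x = ln \<integral> e\<^sup>\<phi> d(k\<^sub>2 x)\<close> is the bounded test function that carries the
  bound for the kernels over to the bound for the mixing measures.\<close>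

lemma KL_dual_bound_bind:
  assumes A: "prob_space A" and B: "prob_space B" and sets_eq: "sets B = sets A"
    and k1[measurable]: "k1 \<in> A \<rightarrow>\<^sub>M prob_algebra X" and k2[measurable]: "k2 \<in> A \<rightarrow>\<^sub>M prob_algebra X"
    and bound: "KL_dual_bound A B K1" and kernel_bound: "\<And>x. x \<in> space A \<Longrightarrow> KL_dual_bound (k1 x) (k2 x) K2"
  shows "KL_dual_bound (A \<bind> k1) (B \<bind> k2) (K1 + K2)"
  unfolding KL_dual_bound_def
proof (intro allI impI)
  interpret A: prob_space A by fact
  interpret B: prob_space B by fact
  have k_space: "prob_space (k x) \<and> sets (k x) = sets X \<and> space (k x) = space X
      \<and> emeasure (k x) (space X) = 1"
    if "k \<in> A \<rightarrow>\<^sub>M prob_algebra X" "x \<in> space A" for k x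
    using measurable_space[OF that]
    by (simp add: space_prob_algebra) (metis sets_eq_imp_space_eq prob_space.emeasure_space_1)
  have [measurable]: "k1 \<in> A \<rightarrow>\<^sub>M subprob_algebra X" "k2 \<in> A \<rightarrow>\<^sub>M subprob_algebra X"
    using k1 k2 by (auto intro: measurable_prob_algebraD)
  have space_B: "space B = space A" using sets_eq by (rule sets_eq_imp_space_eq)
  have k2_B: "k2 \<in> B \<rightarrow>\<^sub>M subprob_algebra X" using sets_eq by (simp cong: measurable_cong_sets)
  have sets_bind: "sets (A \<bind> k1) = sets X"
    using k_space[OF k1] A.not_empty by (intro sets_bind) auto
  fix \<phi> :: "_ \<Rightarrow> real"
  assume "\<phi> \<in> borel_measurable (A \<bind> k1)" and "\<exists>C. \<forall>x\<in>space (A \<bind> k1). \<bar>\<phi> x\<bar> \<le> C"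
  then have [measurable]: "\<phi> \<in> borel_measurable X" and "\<exists>C. \<forall>x\<in>space X. \<bar>\<phi> x\<bar> \<le> C"
    using sets_bind sets_eq_imp_space_eq[OF sets_bind] by (auto cong: measurable_cong_sets)
  then obtain C where C: "\<And>x. x \<in> space X \<Longrightarrow> \<bar>\<phi> x\<bar> \<le> C" by blast
  define \<psi> where "\<psi> x = ln (\<integral>y. exp (\<phi> y) \<partial>k2 x)" for x
  have \<psi>_measurable[measurable]: "\<psi> \<in> borel_measurable A"
    unfolding \<psi>_def by measurable
  have exp_\<psi>: "exp (\<psi> x) = (\<integral>y. exp (\<phi> y) \<partial>k2 x)" if "x \<in> space A" for x
    using k_space[OF k2 that] C unfolding \<psi>_def
    by (subst exp_ln) (auto intro!: prob_space.integral_exp_pos cong: measurable_cong_sets)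
  have \<psi>_bound: "\<bar>\<psi> x\<bar> \<le> C" if x: "x \<in> space A" for x
  proof -
    interpret k2x: prob_space "k2 x" using k_space[OF k2 x] by simp
    have int: "integrable (k2 x) (\<lambda>y. exp (\<phi> y))"
      using k_space[OF k2 x] C by (intro k2x.integrable_abs_le_const[where B="exp C"])
        (auto simp: abs_le_iff cong: measurable_cong_sets)
    have "exp (- C) \<le> exp (\<psi> x)" "exp (\<psi> x) \<le> exp C"
      unfolding exp_\<psi>[OF x] using k_space[OF k2 x] C int unfolding abs_le_iff
      by (auto intro!: k2x.integral_ge_const k2x.integral_le_const AE_I2 simp: minus_le_iff)
    then show ?thesis by (simp add: abs_le_iff)
  qed
  have inner_measurable[measurable]: "(\<lambda>x. \<integral>y. \<phi> y \<partial>k1 x) \<in> borel_measurable A" by measurable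
  have inner_bound: "\<bar>\<integral>y. \<phi> y \<partial>k1 x\<bar> \<le> C" if x: "x \<in> space A" for x
    using k_space[OF k1 x] C by (intro prob_space.abs_integral_le_const) (auto cong: measurable_cong_sets)
  have "(\<integral>x. \<phi> x \<partial>(A \<bind> k1)) = (\<integral>x. (\<integral>y. \<phi> y \<partial>k1 x) \<partial>A)"
    using C k_space[OF k1]
    by (intro integral_bind[where B'=1 and B=C and K=X]) (auto intro!: AE_I2 simp: A.emeasure_space_1)
  also have "\<dots> \<le> (\<integral>x. K2 + \<psi> x \<partial>A)"
  proof (intro integral_mono)
    show "integrable A (\<lambda>x. \<integral>y. \<phi> y \<partial>k1 x)"
      using inner_bound by (intro A.integrable_abs_le_const) auto
    show "integrable A (\<lambda>x. K2 + \<psi> x)"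
      using \<psi>_bound by (intro Bochner_Integration.integrable_add A.integrable_abs_le_const) auto
    fix x assume x: "x \<in> space A"
    show "(\<integral>y. \<phi> y \<partial>k1 x) \<le> K2 + \<psi> x"
      unfolding \<psi>_def using k_space[OF k1 x] C
      by (intro KL_dual_boundD[OF kernel_bound[OF x]]) (auto cong: measurable_cong_sets)
  qed
  also have "\<dots> = K2 + (\<integral>x. \<psi> x \<partial>A)"
    using A.integrable_abs_le_const[OF \<psi>_measurable \<psi>_bound] by (simp add: A.prob_space)
  also have "(\<integral>x. \<psi> x \<partial>A) \<le> K1 + ln (\<integral>x. exp (\<psi> x) \<partial>B)"
    using \<psi>_bound by (intro KL_dual_boundD[OF bound]) auto
  also have "(\<integral>x. exp (\<psi> x) \<partial>B) = (\<integral>x. (\<integral>y. exp (\<phi> y) \<partial>k2 x) \<partial>B)"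
    using exp_\<psi> space_B by (intro Bochner_Integration.integral_cong) auto
  also have "\<dots> = (\<integral>y. exp (\<phi> y) \<partial>(B \<bind> k2))"
    using C k_space[OF k2] space_B k2_B
    by (intro integral_bind[symmetric, where B'=1 and B="exp C" and K=X])
      (auto intro!: AE_I2 simp: B.emeasure_space_1 abs_le_iff)
  finally show "(\<integral>x. \<phi> x \<partial>(A \<bind> k1)) \<le> K1 + K2 + ln (\<integral>x. exp (\<phi> x) \<partial>(B \<bind> k2))"
    by simp
qed

text \<open>An abbreviation, so that it literally matches the reward distribution in \<open>traj\<close>.\<close>

abbreviation gaussian :: "real \<Rightarrow> real measure" where
  "gaussian \<mu> \<equiv> density lborel (normal_density \<mu> 1)"

lemma normal_density_shift: "normal_density \<mu> 1 x = normal_density 0 1 x * exp (\<mu> * x - \<mu>\<^sup>2 / 2)"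
proof -
  have "- (x - \<mu>)\<^sup>2 / 2 = - x\<^sup>2 / 2 + (\<mu> * x - \<mu>\<^sup>2 / 2)"
    by (simp add: power2_eq_square field_simps)
  then show ?thesis unfolding normal_density_def by (simp flip: exp_add)
qed

lemma gaussian_eq_density_gaussian_0: "gaussian \<mu> = density (gaussian 0) (\<lambda>x. exp (\<mu> * x - \<mu>\<^sup>2 / 2))"
  by (subst density_density_eq) (auto simp: normal_density_shift[of \<mu>] ennreal_mult'' normal_density_nonneg)

lemma KL_dual_bound_gaussian: "KL_dual_bound (gaussian \<mu>) (gaussian 0) (\<mu>\<^sup>2 / 2)"
proof -
  define \<rho> :: "real \<Rightarrow> real" where "\<rho> = (\<lambda>x. exp (\<mu> * x - \<mu>\<^sup>2 / 2))"
  have [measurable]: "\<rho> \<in> borel_measurable borel" unfolding \<rho>_def by measurable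
  have change:
    "integrable (gaussian 0) (\<lambda>x. \<rho> x * f x) \<longleftrightarrow> integrable lborel (\<lambda>x. normal_density \<mu> 1 x * f x)"
    "(\<integral>x. \<rho> x * f x \<partial>gaussian 0) = (\<integral>x. normal_density \<mu> 1 x * f x \<partial>lborel)"
    if [measurable]: "f \<in> borel_measurable borel" for f
    by (simp_all add: integrable_density integral_density normal_density_nonneg normal_density_shift[of \<mu>]
        \<rho>_def mult.assoc)
  have ln_\<rho>: "\<rho> x * ln (\<rho> x) = \<rho> x * (\<mu> * x - \<mu>\<^sup>2 / 2)" for x unfolding \<rho>_def by simp
  have moment: "integrable lborel (\<lambda>x. normal_density \<mu> 1 x * (\<mu> * x - \<mu>\<^sup>2 / 2))"
    "(\<integral>x. normal_density \<mu> 1 x * (\<mu> * x - \<mu>\<^sup>2 / 2) \<partial>lborel) = \<mu>\<^sup>2 / 2"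
  proof -
    have "(\<lambda>x. normal_density \<mu> 1 x * (\<mu> * x - \<mu>\<^sup>2 / 2))
        = (\<lambda>x. \<mu> * (normal_density \<mu> 1 x * x) - \<mu>\<^sup>2 / 2 * normal_density \<mu> 1 x)"
      by (simp add: fun_eq_iff algebra_simps)
    then show "integrable lborel (\<lambda>x. normal_density \<mu> 1 x * (\<mu> * x - \<mu>\<^sup>2 / 2))"
      "(\<integral>x. normal_density \<mu> 1 x * (\<mu> * x - \<mu>\<^sup>2 / 2) \<partial>lborel) = \<mu>\<^sup>2 / 2"
      by (simp_all add: integrable_normal_moment_nz_1 integral_normal_moment_nz_1 power2_eq_square)
  qed
  have "KL_dual_bound (density (gaussian 0) \<rho>) (gaussian 0) (\<integral>x. \<rho> x * ln (\<rho> x) \<partial>gaussian 0)"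
  proof (rule KL_dual_bound_density[OF prob_space_normal_density])
    show "integrable (gaussian 0) \<rho>" "(\<integral>x. \<rho> x \<partial>gaussian 0) = 1"
      using change[of "\<lambda>_. 1"] by simp_all
    show "integrable (gaussian 0) (\<lambda>x. \<rho> x * ln (\<rho> x))"
      unfolding ln_\<rho> by (subst change(1)) (auto simp: moment)
  qed (auto simp: \<rho>_def)
  moreover have "(\<integral>x. \<rho> x * ln (\<rho> x) \<partial>gaussian 0) = \<mu>\<^sup>2 / 2"
    unfolding ln_\<rho> by (subst change(2)) (auto simp: moment)
  moreover have "density (gaussian 0) \<rho> = gaussian \<mu>"
    unfolding \<rho>_def by (rule gaussian_eq_density_gaussian_0[symmetric])
  ultimately show ?thesis by simp
qed

lemma space_hist_space[simp]: "space hist_space = UNIV"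
  unfolding hist_space_def by (simp add: space_PiM space_pair_measure)

lemma measurable_hist_update[measurable]:
  assumes [measurable]: "h \<in> L \<rightarrow>\<^sub>M hist_space" "a \<in> L \<rightarrow>\<^sub>M count_space UNIV" "r \<in> L \<rightarrow>\<^sub>M borel"
  shows "(\<lambda>x. (h x)(t := (a x, r x))) \<in> L \<rightarrow>\<^sub>M hist_space"
  using assms(1) unfolding hist_space_def by (intro measurable_fun_upd[where J=UNIV]) auto

lemma measurable_arm_count_space: "(\<lambda>a. a) \<in> arms_space \<rightarrow>\<^sub>M count_space UNIV"
  unfolding arms_space_def by simp

lemma measurable_gaussian_arm: "(\<lambda>a. gaussian (mu a)) \<in> arms_space \<rightarrow>\<^sub>M prob_algebra borel"
  unfolding arms_space_def by (auto simp: space_prob_algebra prob_space_normal_density)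

definition bandit_step ::
    "(nat \<Rightarrow> real) \<Rightarrow> 'm policy \<Rightarrow> 'm \<Rightarrow> nat \<Rightarrow> (nat \<Rightarrow> nat \<times> real) \<Rightarrow> (nat \<Rightarrow> nat \<times> real) measure"
  where "bandit_step mu \<pi> m t h =
    \<pi> t (m, h) \<bind> (\<lambda>a. distr (gaussian (mu a)) hist_space (\<lambda>r. h(t := (a, r))))"

lemma traj_Suc_bandit_step: "traj mu \<pi> m (Suc t) = traj mu \<pi> m t \<bind> bandit_step mu \<pi> m t"
  unfolding bandit_step_def[abs_def] by simp

lemma measurable_bandit_step:
  assumes "policy_measurable N \<pi>"
  shows "(\<lambda>(m, h). bandit_step mu \<pi> m t h) \<in> N \<Otimes>\<^sub>M hist_space \<rightarrow>\<^sub>M prob_algebra hist_space"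
proof -
  have \<pi>_t: "\<pi> t \<in> N \<Otimes>\<^sub>M hist_space \<rightarrow>\<^sub>M prob_algebra arms_space"
    using assms unfolding policy_measurable_def by blast
  have [measurable]: "(\<lambda>x. snd x) \<in> (N \<Otimes>\<^sub>M hist_space) \<Otimes>\<^sub>M arms_space \<rightarrow>\<^sub>M count_space UNIV"
    by (rule measurable_compose[OF measurable_snd measurable_arm_count_space])
  have "(\<lambda>x. gaussian (mu (snd x))) \<in> (N \<Otimes>\<^sub>M hist_space) \<Otimes>\<^sub>M arms_space \<rightarrow>\<^sub>M prob_algebra borel"
    by (rule measurable_compose[OF measurable_snd measurable_gaussian_arm])
  moreover have "(\<lambda>(x, r). (snd (fst x))(t := (snd x, r)))
      \<in> ((N \<Otimes>\<^sub>M hist_space) \<Otimes>\<^sub>M arms_space) \<Otimes>\<^sub>M borel \<rightarrow>\<^sub>M hist_space"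
    by measurable
  ultimately have kernel:
    "(\<lambda>x. distr (gaussian (mu (snd x))) hist_space (\<lambda>r. (snd (fst x))(t := (snd x, r))))
      \<in> (N \<Otimes>\<^sub>M hist_space) \<Otimes>\<^sub>M arms_space \<rightarrow>\<^sub>M prob_algebra hist_space"
    by (rule measurable_distr_prob_space2)
  then have "(\<lambda>x. \<pi> t x \<bind> (\<lambda>a. distr (gaussian (mu a)) hist_space (\<lambda>r. (snd x)(t := (a, r)))))
      \<in> N \<Otimes>\<^sub>M hist_space \<rightarrow>\<^sub>M prob_algebra hist_space"
    using kernel by (intro measurable_bind_prob_space2[OF \<pi>_t]) (simp add: case_prod_beta)
  then show ?thesis by (simp add: bandit_step_def case_prod_beta')
qed

lemma measurable_traj:
  assumes "policy_measurable N \<pi>"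
  shows "(\<lambda>m. traj mu \<pi> m t) \<in> N \<rightarrow>\<^sub>M prob_algebra hist_space"
proof (induction t)
  case 0
  show ?case by (auto simp: space_prob_algebra prob_space_return)
next
  case (Suc t)
  then show ?case
    unfolding traj_Suc_bandit_step
    by (rule measurable_bind_prob_space2) (use measurable_bandit_step[OF assms] in simp)
qed

lemma
  assumes "policy_measurable N \<pi>" and "m \<in> space N"
  shows prob_space_traj: "prob_space (traj mu \<pi> m t)"
    and sets_traj: "sets (traj mu \<pi> m t) = sets hist_space"
  using measurable_space[OF measurable_traj[OF assms(1)] assms(2)] by (auto simp: space_prob_algebra)

lemma KL_dual_bound_bandit_step:
  assumes "policy_measurable N \<pi>" and "m \<in> space N" and "\<And>a. (mu a)\<^sup>2 \<le> c"
  shows "KL_dual_bound (bandit_step mu \<pi> m t h) (bandit_step (\<lambda>_. 0) \<pi> m t h) (c / 2)"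
proof -
  have "\<pi> t (m, h) \<in> space (prob_algebra arms_space)"
    using assms(1,2) unfolding policy_measurable_def
    by (auto intro: measurable_space simp: space_pair_measure)
  then have prob: "prob_space (\<pi> t (m, h))" and sets_eq: "sets (\<pi> t (m, h)) = sets arms_space"
    by (auto simp: space_prob_algebra)
  have kernel: "(\<lambda>a. distr (gaussian (\<nu> a)) hist_space (\<lambda>r. h(t := (a, r))))
      \<in> \<pi> t (m, h) \<rightarrow>\<^sub>M prob_algebra hist_space" for \<nu> :: "nat \<Rightarrow> real"
    using sets_eq by (subst measurable_cong_sets[OF sets_eq refl])
      (auto simp: arms_space_def space_prob_algebra
        intro!: prob_space.prob_space_distr prob_space_normal_density)
  have "KL_dual_bound (distr (gaussian (mu a)) hist_space (\<lambda>r. h(t := (a, r))))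
      (distr (gaussian 0) hist_space (\<lambda>r. h(t := (a, r)))) (c / 2)" for a
    using assms(3)[of a]
    by (intro KL_dual_bound_distr KL_dual_bound_mono[OF KL_dual_bound_gaussian]) auto
  then have "KL_dual_bound (bandit_step mu \<pi> m t h) (bandit_step (\<lambda>_. 0) \<pi> m t h) (0 + c / 2)"
    unfolding bandit_step_def using kernel
    by (intro KL_dual_bound_bind[OF prob prob refl _ _ KL_dual_bound_refl[OF prob]]) auto
  then show ?thesis by simp
qed

lemma KL_dual_bound_traj:
  assumes \<pi>: "policy_measurable N \<pi>" and m: "m \<in> space N" and c: "\<And>a. (mu a)\<^sup>2 \<le> c"
  shows "KL_dual_bound (traj mu \<pi> m t) (traj (\<lambda>_. 0) \<pi> m t) (t * c / 2)"
proof (induction t)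
  case 0
  then show ?case by (simp add: KL_dual_bound_refl prob_space_return)
next
  case (Suc t)
  have "(\<lambda>h. bandit_step \<nu> \<pi> m t h) \<in> traj mu \<pi> m t \<rightarrow>\<^sub>M prob_algebra hist_space" for \<nu>
    using measurable_compose[OF measurable_Pair[OF measurable_const[OF m] measurable_ident]
        measurable_bandit_step[OF \<pi>]]
      sets_traj[OF \<pi> m]
    by (simp cong: measurable_cong_sets)
  then have "KL_dual_bound (traj mu \<pi> m (Suc t)) (traj (\<lambda>_. 0) \<pi> m (Suc t)) (t * c / 2 + c / 2)"
    unfolding traj_Suc_bandit_step
    using prob_space_traj[OF \<pi> m] sets_traj[OF \<pi> m] KL_dual_bound_bandit_step[OF \<pi> m c]
    by (intro KL_dual_bound_bind Suc) auto
  then show ?case by (simp add: field_simps)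
qed

lemma (in finite_measure) AE_le_of_density_le:
  assumes [measurable]: "f \<in> borel_measurable M"
    and le: "\<And>A. A \<in> sets M \<Longrightarrow> emeasure (density M f) A \<le> ennreal c * emeasure M A"
  shows "AE x in M. f x \<le> ennreal c"
proof (rule ccontr)
  define S where "S = {x \<in> space M. ennreal c < f x}"
  have [measurable]: "S \<in> sets M" unfolding S_def by measurable
  assume not_AE: "\<not> (AE x in M. f x \<le> ennreal c)"
  have pointwise: "f x \<le> ennreal c"
    if "x \<in> space M" "f x * indicator S x \<le> ennreal c * indicator S x" for x
  proof (cases "x \<in> S")
    case False
    then show ?thesis using that(1) by (simp add: S_def not_less)
  qed (use that(2) in simp)
  have "\<not> (AE x in M. f x * indicator S x \<le> ennreal c * indicator S x)"
  proof
    assume "AE x in M. f x * indicator S x \<le> ennreal c * indicator S x"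
    with AE_space have "AE x in M. f x \<le> ennreal c" by eventually_elim (blast intro: pointwise)
    with not_AE show False by blast
  qed
  then have "(\<integral>\<^sup>+x. ennreal c * indicator S x \<partial>M) < (\<integral>\<^sup>+x. f x * indicator S x \<partial>M)"
    by (intro nn_integral_less)
      (auto simp: nn_integral_cmult_indicator emeasure_finite ennreal_mult_eq_top_iff S_def
        intro!: AE_I2 split: split_indicator)
  then show False
    using le[of S] by (simp add: emeasure_density nn_integral_cmult_indicator)
qed

lemma abs_mult_ln_le_2:
  fixes \<rho> :: real
  assumes "0 \<le> \<rho>" "\<rho> \<le> 2"
  shows "\<bar>\<rho> * ln \<rho>\<bar> \<le> 2"
proof (cases "\<rho> = 0")
  case False
  then have \<rho>: "0 < \<rho>" using assms by simp
  have "ln \<rho> \<le> 1" using ln_le_minus_one[OF \<rho>] assms by simp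
  then have upper: "\<rho> * ln \<rho> \<le> \<rho>" using mult_left_mono[of "ln \<rho>" 1 \<rho>] \<rho> by simp
  have "- ln \<rho> \<le> 1 / \<rho> - 1" using ln_le_minus_one[of "1 / \<rho>"] \<rho> by (simp add: ln_div)
  then have "\<rho> * (- ln \<rho>) \<le> \<rho> * (1 / \<rho> - 1)" using \<rho> by (intro mult_left_mono) auto
  then have lower: "- (\<rho> * ln \<rho>) \<le> 1 - \<rho>" using \<rho> by (simp add: right_diff_distrib)
  show ?thesis using upper lower assms unfolding abs_le_iff by linarith
qed simp

text \<open>\<open>X\<close> is the side information \<open>M\<close> and \<open>Y\<close> the best arm \<open>a\<^sub>*\<close>.\<close>

locale uniform_arm = P: prob_space P
  for P :: "'w measure" and N :: "'m measure" and X :: "'w \<Rightarrow> 'm" and Y :: "'w \<Rightarrow> nat" +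
  assumes measurable_X[measurable]: "X \<in> P \<rightarrow>\<^sub>M N"
    and measurable_Y[measurable]: "Y \<in> P \<rightarrow>\<^sub>M arms_space"
    and prob_Y_1: "measure P {\<omega> \<in> space P. Y \<omega> = 1} = 1/2"
    and prob_Y_2: "measure P {\<omega> \<in> space P. Y \<omega> = 2} = 1/2"
begin

lemma Y_in_arms: "\<omega> \<in> space P \<Longrightarrow> Y \<omega> \<in> {1, 2}"
  using measurable_space[OF measurable_Y] by (auto simp: arms_space_def)

lemma sets_Y_eq: "{\<omega> \<in> space P. Y \<omega> = a} \<in> sets P"
proof -
  have "{\<omega> \<in> space P. Y \<omega> = a} = Y -` ({a} \<inter> {1, 2}) \<inter> space P" using Y_in_arms by auto
  then show ?thesis
    using measurable_sets[OF measurable_Y, of "{a} \<inter> {1, 2}"] by (auto simp: arms_space_def)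
qed

lemma prob_space_law_Y: "prob_space (distr P arms_space Y)"
  by (rule P.prob_space_distr) simp

lemma nn_integral_law_Y: "2 * (\<integral>\<^sup>+y. f y \<partial>distr P arms_space Y) = f 1 + f 2"
proof -
  have half: "emeasure P {\<omega> \<in> space P. Y \<omega> = 1} = ennreal (1/2)"
    "emeasure P {\<omega> \<in> space P. Y \<omega> = 2} = ennreal (1/2)"
    by (simp_all only: P.emeasure_eq_measure prob_Y_1 prob_Y_2)
  have "(\<integral>\<^sup>+y. f y \<partial>distr P arms_space Y) = (\<integral>\<^sup>+\<omega>. f (Y \<omega>) \<partial>P)"
    by (subst nn_integral_distr) (use measurable_Y in \<open>auto simp: arms_space_def\<close>)
  also have "\<dots> = (\<integral>\<^sup>+\<omega>. f 1 * indicator {\<omega> \<in> space P. Y \<omega> = 1} \<omega>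
      + f 2 * indicator {\<omega> \<in> space P. Y \<omega> = 2} \<omega> \<partial>P)"
    by (intro nn_integral_cong) (auto dest: Y_in_arms simp: indicator_def)
  also have "\<dots> = f 1 * emeasure P {\<omega> \<in> space P. Y \<omega> = 1} + f 2 * emeasure P {\<omega> \<in> space P. Y \<omega> = 2}"
    using sets_Y_eq by (simp add: nn_integral_add nn_integral_cmult_indicator)
  also have "\<dots> = (f 1 + f 2) * ennreal (1/2)"
    unfolding half by (simp add: distrib_right)
  moreover have "2 * (s * ennreal (1/2)) = s" for s :: ennreal
  proof -
    have "ennreal 2 * ennreal (1/2) = 1" by (subst ennreal_mult[symmetric]) auto
    then show ?thesis by (metis ennreal_numeral mult.left_commute mult_1_right)
  qed
  ultimately show ?thesis by (simp only:)
qed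

lemma integral_law_Y: "(\<integral>y. f y \<partial>distr P arms_space Y) = ((f 1 + f 2) / 2 :: real)"
proof -
  have "(\<integral>y. f y \<partial>distr P arms_space Y) = (\<integral>\<omega>. f (Y \<omega>) \<partial>P)"
    by (subst integral_distr) (use measurable_Y in \<open>auto simp: arms_space_def\<close>)
  also have "\<dots> = (\<integral>\<omega>. f 1 * indicator {\<omega> \<in> space P. Y \<omega> = 1} \<omega>
      + f 2 * indicator {\<omega> \<in> space P. Y \<omega> = 2} \<omega> \<partial>P)"
    by (intro Bochner_Integration.integral_cong) (auto dest: Y_in_arms simp: indicator_def)
  also have "\<dots> = f 1 * measure P {\<omega> \<in> space P. Y \<omega> = 1} + f 2 * measure P {\<omega> \<in> space P. Y \<omega> = 2}"
    using sets_Y_eq by (subst Bochner_Integration.integral_add) (auto simp: P.emeasure_eq_measure)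
  also have "\<dots> = (f 1 + f 2) / 2"
    unfolding prob_Y_1 prob_Y_2 by simp
  finally show ?thesis .
qed

text \<open>Since each arm has mass \<open>1/2\<close>, the joint law of \<open>(X, Y)\<close> has density at most 2 with
  respect to the product of the marginals; this keeps the entropy integrand bounded.\<close>

lemma emeasure_joint_le:
  assumes S: "S \<in> sets (N \<Otimes>\<^sub>M arms_space)"
  shows "emeasure (distr P (N \<Otimes>\<^sub>M arms_space) (\<lambda>\<omega>. (X \<omega>, Y \<omega>))) S
    \<le> 2 * emeasure (distr P N X \<Otimes>\<^sub>M distr P arms_space Y) S"
proof -
  let ?L = "distr P N X" and ?U = "distr P arms_space Y"
  interpret U: prob_space ?U by (rule prob_space_law_Y)
  have S': "S \<in> sets (?L \<Otimes>\<^sub>M ?U)" using S by (simp cong: sets_pair_measure_cong)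
  have "emeasure (distr P (N \<Otimes>\<^sub>M arms_space) (\<lambda>\<omega>. (X \<omega>, Y \<omega>))) S = (\<integral>\<^sup>+\<omega>. indicator S (X \<omega>, Y \<omega>) \<partial>P)"
    using S by (subst emeasure_distr)
      (auto simp flip: nn_integral_indicator intro!: nn_integral_cong simp: indicator_def)
  also have "\<dots> \<le> (\<integral>\<^sup>+\<omega>. 2 * emeasure ?U (Pair (X \<omega>) -` S) \<partial>P)"
  proof (intro nn_integral_mono)
    fix \<omega> assume "\<omega> \<in> space P"
    then have "indicator S (X \<omega>, Y \<omega>)
        \<le> (indicator (Pair (X \<omega>) -` S) 1 + indicator (Pair (X \<omega>) -` S) 2 :: ennreal)"
      using Y_in_arms[OF \<open>\<omega> \<in> space P\<close>] by (auto simp: indicator_def)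
    also have "\<dots> = 2 * emeasure ?U (Pair (X \<omega>) -` S)"
      using nn_integral_law_Y[of "indicator (Pair (X \<omega>) -` S)"] sets_Pair1[OF S'] by simp
    finally show "indicator S (X \<omega>, Y \<omega>) \<le> 2 * emeasure ?U (Pair (X \<omega>) -` S)" .
  qed
  also have "\<dots> = 2 * (\<integral>\<^sup>+x. emeasure ?U (Pair x -` S) \<partial>?L)"
    using U.measurable_emeasure_Pair[OF S']
    by (subst nn_integral_cmult) (auto simp: nn_integral_distr cong: measurable_cong_sets)
  also have "\<dots> = 2 * emeasure (?L \<Otimes>\<^sub>M ?U) S"
    using U.emeasure_pair_measure_alt[OF S'] by simp
  finally show ?thesis .
qed

lemma joint_law_density:
  obtains \<rho> where "\<rho> \<in> borel_measurable (distr P N X \<Otimes>\<^sub>M distr P arms_space Y)" "\<And>z. 0 \<le> \<rho> z"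
    "AE z in distr P N X \<Otimes>\<^sub>M distr P arms_space Y. \<rho> z \<le> 2"
    "distr P (N \<Otimes>\<^sub>M arms_space) (\<lambda>\<omega>. (X \<omega>, Y \<omega>)) = density (distr P N X \<Otimes>\<^sub>M distr P arms_space Y) \<rho>"
    "P.mutual_information (exp 1) N arms_space X Y
      = (\<integral>z. \<rho> z * ln (\<rho> z) \<partial>(distr P N X \<Otimes>\<^sub>M distr P arms_space Y))"
proof -
  let ?L = "distr P N X" and ?U = "distr P arms_space Y"
  let ?J = "distr P (N \<Otimes>\<^sub>M arms_space) (\<lambda>\<omega>. (X \<omega>, Y \<omega>))" and ?Pr = "?L \<Otimes>\<^sub>M ?U"
  interpret L: prob_space ?L by (rule P.prob_space_distr) simp
  interpret U: prob_space ?U by (rule prob_space_law_Y)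
  interpret LU: pair_prob_space ?L ?U by unfold_locales
  have sets_Pr: "sets ?Pr = sets (N \<Otimes>\<^sub>M arms_space)" by (simp cong: sets_pair_measure_cong)
  have ac: "absolutely_continuous ?Pr ?J"
    unfolding absolutely_continuous_def
  proof
    fix A assume "A \<in> null_sets ?Pr"
    then have A: "A \<in> sets (N \<Otimes>\<^sub>M arms_space)" "emeasure ?Pr A = 0" using sets_Pr by auto
    then have "emeasure ?J A \<le> 0" using emeasure_joint_le[OF A(1)] by simp
    then show "A \<in> null_sets ?J" using A by auto
  qed
  define r where "r = RN_deriv ?Pr ?J"
  have [measurable]: "r \<in> borel_measurable ?Pr" unfolding r_def by simp
  have J_density: "density ?Pr r = ?J" unfolding r_def
    using sets_Pr by (intro LU.density_RN_deriv[OF ac]) simp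
  have r_le_2: "AE x in ?Pr. r x \<le> ennreal 2"
    using emeasure_joint_le sets_Pr by (intro LU.AE_le_of_density_le) (simp_all add: J_density)
  define \<rho> where "\<rho> x = enn2real (r x)" for x
  have \<rho>_nonneg: "0 \<le> \<rho> x" for x unfolding \<rho>_def by simp
  have [measurable]: "\<rho> \<in> borel_measurable ?Pr" unfolding \<rho>_def by measurable
  have J_eq: "?J = density ?Pr \<rho>"
    unfolding J_density[symmetric] using r_le_2
    by (intro density_cong) (auto elim!: eventually_mono simp: \<rho>_def ennreal_enn2real_if top_unique)
  show thesis
  proof
    show "\<rho> \<in> borel_measurable ?Pr" "0 \<le> \<rho> z" for z by (simp_all add: \<rho>_nonneg)
    show "AE x in ?Pr. \<rho> x \<le> 2"
      using r_le_2 by eventually_elim (auto simp: \<rho>_def enn2real_leI)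
    show "?J = density ?Pr \<rho>" by (fact J_eq)
    have "P.mutual_information (exp 1) N arms_space X Y = (\<integral>x. ln (\<rho> x) \<partial>?J)"
      unfolding P.mutual_information_def KL_divergence_def entropy_density_def r_def[symmetric]
      by (simp add: log_def \<rho>_def comp_def)
    then show "P.mutual_information (exp 1) N arms_space X Y = (\<integral>x. \<rho> x * ln (\<rho> x) \<partial>?Pr)"
      by (simp add: J_eq integral_density \<rho>_nonneg)
  qed
qed

lemma KL_dual_bound_mutual_information:
  "KL_dual_bound (distr P (N \<Otimes>\<^sub>M arms_space) (\<lambda>\<omega>. (X \<omega>, Y \<omega>))) (distr P N X \<Otimes>\<^sub>M distr P arms_space Y)
    (P.mutual_information (exp 1) N arms_space X Y)"
proof -
  let ?Pr = "distr P N X \<Otimes>\<^sub>M distr P arms_space Y"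
  interpret L: prob_space "distr P N X" by (rule P.prob_space_distr) simp
  interpret U: prob_space "distr P arms_space Y" by (rule prob_space_law_Y)
  interpret LU: pair_prob_space "distr P N X" "distr P arms_space Y" by unfold_locales
  interpret J: prob_space "distr P (N \<Otimes>\<^sub>M arms_space) (\<lambda>\<omega>. (X \<omega>, Y \<omega>))"
    by (rule P.prob_space_distr) simp
  obtain \<rho> where [measurable]: "\<rho> \<in> borel_measurable ?Pr" and nonneg: "\<And>z. 0 \<le> \<rho> z"
    and le_2: "AE z in ?Pr. \<rho> z \<le> 2"
    and J: "distr P (N \<Otimes>\<^sub>M arms_space) (\<lambda>\<omega>. (X \<omega>, Y \<omega>)) = density ?Pr \<rho>"
    and MI: "P.mutual_information (exp 1) N arms_space X Y = (\<integral>z. \<rho> z * ln (\<rho> z) \<partial>?Pr)"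
    using joint_law_density by blast
  have "(\<integral>z. \<rho> z \<partial>?Pr) = 1"
    using integral_density[of "\<lambda>_. 1 :: real" ?Pr \<rho>] J.prob_space by (simp add: J nonneg)
  moreover have "integrable ?Pr \<rho>" "integrable ?Pr (\<lambda>z. \<rho> z * ln (\<rho> z))"
    using le_2 nonneg abs_mult_ln_le_2
    by (auto intro!: LU.integrable_const_bound[where B=2] elim!: eventually_mono)
  ultimately show ?thesis
    unfolding J MI using nonneg by (intro KL_dual_bound_density LU.prob_space_axioms) auto
qed

lemma integral_le_mutual_information:
  assumes [measurable]: "\<psi> \<in> borel_measurable (N \<Otimes>\<^sub>M arms_space)"
    and bound: "\<And>z. z \<in> space (N \<Otimes>\<^sub>M arms_space) \<Longrightarrow> \<bar>\<psi> z\<bar> \<le> B"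
  shows "(\<integral>\<omega>. \<psi> (X \<omega>, Y \<omega>) \<partial>P) \<le> P.mutual_information (exp 1) N arms_space X Y
    + ln (\<integral>x. (exp (\<psi> (x, 1)) + exp (\<psi> (x, 2))) / 2 \<partial>distr P N X)"
proof -
  let ?L = "distr P N X" and ?U = "distr P arms_space Y"
  interpret L: prob_space ?L by (rule P.prob_space_distr) simp
  interpret U: prob_space ?U by (rule prob_space_law_Y)
  interpret LU: pair_prob_space ?L ?U by unfold_locales
  have sets_Pr: "sets (?L \<Otimes>\<^sub>M ?U) = sets (N \<Otimes>\<^sub>M arms_space)" by (simp cong: sets_pair_measure_cong)
  have "integrable (?L \<Otimes>\<^sub>M ?U) (\<lambda>z. exp (\<psi> z))"
    using bound sets_eq_imp_space_eq[OF sets_Pr]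
    by (intro LU.integrable_abs_le_const[where B="exp B"])
      (auto simp: abs_le_iff cong: measurable_cong_sets)
  then have fubini: "(\<integral>z. exp (\<psi> z) \<partial>(?L \<Otimes>\<^sub>M ?U)) = (\<integral>x. (exp (\<psi> (x, 1)) + exp (\<psi> (x, 2))) / 2 \<partial>?L)"
    by (simp add: integral_law_Y flip: LU.integral_fst')
  have "(\<integral>\<omega>. \<psi> (X \<omega>, Y \<omega>) \<partial>P) = (\<integral>z. \<psi> z \<partial>distr P (N \<Otimes>\<^sub>M arms_space) (\<lambda>\<omega>. (X \<omega>, Y \<omega>)))"
    by (simp add: integral_distr)
  also have "\<dots> \<le> P.mutual_information (exp 1) N arms_space X Y + ln (\<integral>z. exp (\<psi> z) \<partial>(?L \<Otimes>\<^sub>M ?U))"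
    using bound by (intro KL_dual_boundD[OF KL_dual_bound_mutual_information]) auto
  finally show ?thesis unfolding fubini .
qed

end

lemma mean_exp_two_point_le_half_case:
  fixes l x :: real
  assumes l: "0 \<le> l" and x: "0 \<le> x" "x \<le> 1/2"
  shows "(exp (l * x) + exp (l * (1 - x))) / 2 \<le> exp (l / 2 + l\<^sup>2 / 8)"
proof -
  define h where "h = l * (1 - 2 * x)"
  have h: "0 \<le> h" "h\<^sup>2 \<le> l\<^sup>2"
    unfolding h_def using l x by (auto simp: abs_mult intro!: power_mono mult_left_le)
  have "- h * (1/2) + ln (1 + (1/2) * (exp h - 1)) \<le> h\<^sup>2 / 8"
    using Hoeffdings_lemma_aux[OF h(1), of "1/2"] by simp
  then have "ln ((1 + exp h) / 2) \<le> h / 2 + h\<^sup>2 / 8" by (simp add: field_simps)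
  then have "(1 + exp h) / 2 \<le> exp (h / 2 + h\<^sup>2 / 8)"
    by (metis exp_le_cancel_iff exp_ln add_pos_pos exp_gt_zero half_gt_zero zero_less_one)
  then have "exp (l * x) * ((1 + exp h) / 2) \<le> exp (l * x) * exp (h / 2 + h\<^sup>2 / 8)"
    by (intro mult_left_mono) auto
  also have "\<dots> = exp (l / 2 + h\<^sup>2 / 8)"
    unfolding h_def by (simp add: field_simps flip: exp_add)
  also have "\<dots> \<le> exp (l / 2 + l\<^sup>2 / 8)" using h(2) by simp
  finally show ?thesis
    unfolding h_def by (simp add: field_simps flip: exp_add)
qed

lemma mean_exp_two_point_le:
  fixes l x :: real
  assumes "0 \<le> l" "0 \<le> x" "x \<le> 1"
  shows "(exp (l * x) + exp (l * (1 - x))) / 2 \<le> exp (l / 2 + l\<^sup>2 / 8)"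
proof (cases "x \<le> 1/2")
  case False
  then show ?thesis
    using mean_exp_two_point_le_half_case[OF assms(1), of "1 - x"] assms by (simp add: add.commute)
qed (use mean_exp_two_point_le_half_case assms in auto)

lemma le_half_plus_sqrt_of_mgf_bound:
  fixes E K :: real
  assumes "0 < K" and bound: "\<And>l. 0 < l \<Longrightarrow> l * E \<le> K + l / 2 + l\<^sup>2 / 8"
  shows "E \<le> 1/2 + sqrt (K / 2)"
proof -
  define s where "s = sqrt (K / 2)"
  have s: "0 < s" "K = 2 * s\<^sup>2" unfolding s_def using assms(1) by simp_all
  have "(4 * s) * E \<le> K + 4 * s / 2 + (4 * s)\<^sup>2 / 8" using bound[of "4 * s"] s(1) by simp
  also have "\<dots> = (4 * s) * (1/2 + s)" unfolding s(2) by (simp add: power2_eq_square algebra_simps)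
  finally have "E \<le> 1/2 + s" by (rule mult_left_le_imp_le) (use s(1) in simp)
  then show ?thesis unfolding s_def .
qed

text \<open>Every action other than 1 counts as arm 2 (a policy only plays arms in \<open>{1, 2}\<close>), and
  for \<open>T = 0\<close> the fraction of arm 1 is the junk value \<open>0 / 0 = 0\<close>.\<close>

definition pull_frac :: "nat \<Rightarrow> nat \<Rightarrow> (nat \<Rightarrow> nat \<times> real) \<Rightarrow> real" where
  "pull_frac T a h =
    (let f = (\<Sum>t<T. if fst (h t) = 1 then 1 else 0) / T in if a = 1 then f else 1 - f)"

lemma measurable_pull_frac[measurable]: "pull_frac T a \<in> borel_measurable hist_space"
proof -
  have [measurable]: "(\<lambda>h. fst (h t)) \<in> hist_space \<rightarrow>\<^sub>M count_space UNIV" for t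
    unfolding hist_space_def by measurable
  show ?thesis unfolding pull_frac_def Let_def by measurable
qed

lemma pull_frac_bounds: "0 \<le> pull_frac T a h" "pull_frac T a h \<le> 1"
proof -
  have "(\<Sum>t<T. if fst (h t) = 1 then 1 else 0) \<le> (\<Sum>t<T. 1 :: real)" by (intro sum_mono) auto
  then have "(\<Sum>t<T. if fst (h t) = 1 then 1 else 0) / T \<le> (1 :: real)"
    by (cases "T = 0") (auto simp: field_simps)
  moreover have "0 \<le> (\<Sum>t<T. if fst (h t) = 1 then 1 else 0 :: real) / T"
    by (intro divide_nonneg_nonneg sum_nonneg) auto
  ultimately show "0 \<le> pull_frac T a h" "pull_frac T a h \<le> 1" by (auto simp: pull_frac_def Let_def)
qed

lemma mean_mgf_pull_frac_le:
  assumes Q: "prob_space Q" "sets Q = sets hist_space" and l: "0 \<le> l"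
  shows "((\<integral>h. exp (l * pull_frac T 1 h) \<partial>Q) + (\<integral>h. exp (l * pull_frac T 2 h) \<partial>Q)) / 2
    \<le> exp (l / 2 + l\<^sup>2 / 8)"
proof -
  interpret Q: prob_space Q by fact
  have int: "integrable Q (\<lambda>h. exp (l * pull_frac T a h))" for a
    using Q(2) pull_frac_bounds[of T a] l
    by (intro Q.integrable_abs_le_const[where B="exp l"])
      (auto simp: mult_left_le cong: measurable_cong_sets)
  have "((\<integral>h. exp (l * pull_frac T 1 h) \<partial>Q) + (\<integral>h. exp (l * pull_frac T 2 h) \<partial>Q)) / 2
      = (\<integral>h. (exp (l * pull_frac T 1 h) + exp (l * pull_frac T 2 h)) / 2 \<partial>Q)"
    using int by simp
  also have "\<dots> \<le> exp (l / 2 + l\<^sup>2 / 8)"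
  proof (intro Q.integral_le_const AE_I2)
    show "integrable Q (\<lambda>h. (exp (l * pull_frac T 1 h) + exp (l * pull_frac T 2 h)) / 2)"
      using int by simp
    show "(exp (l * pull_frac T 1 h) + exp (l * pull_frac T 2 h)) / 2 \<le> exp (l / 2 + l\<^sup>2 / 8)" for h
      using mean_exp_two_point_le[OF l pull_frac_bounds[of T 1 h]] by (simp add: pull_frac_def Let_def)
  qed
  finally show ?thesis .
qed

lemma measurable_pair_arms_space:
  assumes "\<And>a. a \<in> {1, 2} \<Longrightarrow> (\<lambda>m. f (m, a)) \<in> N \<rightarrow>\<^sub>M K"
  shows "f \<in> N \<Otimes>\<^sub>M arms_space \<rightarrow>\<^sub>M K"
proof -
  have "(\<lambda>(a, m). f (m, a)) \<in> count_space {1, 2} \<Otimes>\<^sub>M N \<rightarrow>\<^sub>M K"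
    using assms by (intro measurable_pair_measure_countable1) auto
  then show ?thesis unfolding arms_space_def by (subst measurable_pair_swap_iff) simp
qed

lemma measurable_traj_subprob:
  "policy_measurable N \<pi> \<Longrightarrow> (\<lambda>m. traj \<mu> \<pi> m t) \<in> N \<rightarrow>\<^sub>M subprob_algebra hist_space"
  by (rule measurable_prob_algebraD[OF measurable_traj])

lemma (in uniform_arm) integrable_expected_pull_frac:
  assumes \<pi>: "policy_measurable N \<pi>"
  shows "integrable P (\<lambda>\<omega>. \<integral>h. pull_frac T (Y \<omega>) h \<partial>traj (\<nu> (Y \<omega>)) \<pi> (X \<omega>) T)"
proof -
  note [measurable] = measurable_traj_subprob[OF \<pi>]
  define g where "g z = (\<integral>h. pull_frac T (snd z) h \<partial>traj (\<nu> (snd z)) \<pi> (fst z) T)" for z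
  have [measurable]: "g \<in> borel_measurable (N \<Otimes>\<^sub>M arms_space)"
    unfolding g_def by (intro measurable_pair_arms_space) simp
  have "\<bar>g (m, a)\<bar> \<le> 1" if "m \<in> space N" for m a
    unfolding g_def fst_conv snd_conv
    using prob_space_traj[OF \<pi> that] sets_traj[OF \<pi> that] pull_frac_bounds[of T a]
    by (intro prob_space.abs_integral_le_const) (auto cong: measurable_cong_sets)
  moreover have "(\<lambda>\<omega>. g (X \<omega>, Y \<omega>)) \<in> borel_measurable P" by measurable
  ultimately have "integrable P (\<lambda>\<omega>. g (X \<omega>, Y \<omega>))"
    using measurable_space[OF measurable_X] by (intro P.integrable_abs_le_const[where B=1]) auto
  then show ?thesis by (simp add: g_def)
qed

text \<open>Taken in the zero-mean reference bandit, whose law of the history does not depend on which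
  arm is the best one.\<close>

definition ref_mgf :: "'m policy \<Rightarrow> nat \<Rightarrow> real \<Rightarrow> nat \<Rightarrow> 'm \<Rightarrow> real" where
  "ref_mgf \<pi> T l a m = (\<integral>h. exp (l * pull_frac T a h) \<partial>traj (\<lambda>_. 0) \<pi> m T)"

lemma measurable_ln_ref_mgf:
  assumes "policy_measurable N \<pi>"
  shows "(\<lambda>(m, a). ln (ref_mgf \<pi> T l a m)) \<in> borel_measurable (N \<Otimes>\<^sub>M arms_space)"
  using measurable_traj_subprob[OF assms]
  unfolding ref_mgf_def by (intro measurable_pair_arms_space) simp

lemma ref_mgf_bounds:
  assumes \<pi>: "policy_measurable N \<pi>" and m: "m \<in> space N" and l: "0 \<le> l"
  shows "1 \<le> ref_mgf \<pi> T l a m" "ref_mgf \<pi> T l a m \<le> exp l"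
proof -
  interpret Q: prob_space "traj (\<lambda>_. 0) \<pi> m T" using prob_space_traj[OF \<pi> m] .
  have "0 \<le> l * pull_frac T a h" "l * pull_frac T a h \<le> l" for h
    using pull_frac_bounds[of T a h] l by (auto intro: mult_left_le)
  moreover have "integrable (traj (\<lambda>_. 0) \<pi> m T) (\<lambda>h. exp (l * pull_frac T a h))"
    using calculation sets_traj[OF \<pi> m]
    by (intro Q.integrable_abs_le_const[where B="exp l"]) (auto cong: measurable_cong_sets)
  ultimately show "1 \<le> ref_mgf \<pi> T l a m" "ref_mgf \<pi> T l a m \<le> exp l"
    unfolding ref_mgf_def by (auto intro!: Q.integral_ge_const Q.integral_le_const AE_I2)
qed

lemma abs_ln_ref_mgf_le:
  assumes "policy_measurable N \<pi>" and "m \<in> space N" and "0 \<le> l"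
  shows "\<bar>ln (ref_mgf \<pi> T l a m)\<bar> \<le> l"
  using ref_mgf_bounds[OF assms, of T a] ln_le_cancel_iff[of "ref_mgf \<pi> T l a m" "exp l"] by simp

lemma (in uniform_arm) integrable_ln_ref_mgf:
  assumes \<pi>: "policy_measurable N \<pi>" and l: "0 \<le> l"
  shows "integrable P (\<lambda>\<omega>. ln (ref_mgf \<pi> T l (Y \<omega>) (X \<omega>)))"
proof -
  have "(\<lambda>\<omega>. ln (ref_mgf \<pi> T l (Y \<omega>) (X \<omega>))) \<in> borel_measurable P"
    using measurable_compose[OF measurable_Pair[OF measurable_X measurable_Y]
        measurable_ln_ref_mgf[OF \<pi>]]
    by simp
  then show ?thesis
    using abs_ln_ref_mgf_le[OF \<pi> _ l] measurable_space[OF measurable_X]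
    by (intro P.integrable_abs_le_const[where B=l]) auto
qed

lemma expected_pull_frac_le_ln_ref_mgf:
  assumes \<pi>: "policy_measurable N \<pi>" and m: "m \<in> space N" and l: "0 \<le> l" and c: "\<And>b. (\<mu> b)\<^sup>2 \<le> c"
  shows "l * (\<integral>h. pull_frac T a h \<partial>traj \<mu> \<pi> m T) \<le> T * c / 2 + ln (ref_mgf \<pi> T l a m)"
proof -
  have "l * (\<integral>h. pull_frac T a h \<partial>traj \<mu> \<pi> m T) = (\<integral>h. l * pull_frac T a h \<partial>traj \<mu> \<pi> m T)"
    by simp
  also have "\<dots> \<le> T * c / 2 + ln (ref_mgf \<pi> T l a m)"
    unfolding ref_mgf_def using sets_traj[OF \<pi> m] pull_frac_bounds[of T a] l
    by (intro KL_dual_boundD[OF KL_dual_bound_traj[OF \<pi> m c], where B=l])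
      (auto cong: measurable_cong_sets intro: mult_left_le)
  finally show ?thesis .
qed

lemma (in uniform_arm) integral_ln_ref_mgf_le:
  assumes \<pi>: "policy_measurable N \<pi>" and l: "0 \<le> l"
  shows "(\<integral>\<omega>. ln (ref_mgf \<pi> T l (Y \<omega>) (X \<omega>)) \<partial>P)
    \<le> P.mutual_information (exp 1) N arms_space X Y + l / 2 + l\<^sup>2 / 8"
proof -
  interpret L: prob_space "distr P N X" by (rule P.prob_space_distr) simp
  note [measurable] = measurable_traj_subprob[OF \<pi>]
  define F where "F m = (ref_mgf \<pi> T l 1 m + ref_mgf \<pi> T l 2 m) / 2" for m
  have [measurable]: "F \<in> borel_measurable N" unfolding F_def ref_mgf_def by measurable
  have F: "F m \<in> {1 .. exp (l / 2 + l\<^sup>2 / 8)}" if "m \<in> space N" for m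
    using mean_mgf_pull_frac_le[OF prob_space_traj[OF \<pi> that] sets_traj[OF \<pi> that] l]
      ref_mgf_bounds(1)[OF \<pi> that l, of T 1] ref_mgf_bounds(1)[OF \<pi> that l, of T 2]
    by (simp add: F_def ref_mgf_def)
  then have "integrable (distr P N X) F"
    by (intro L.integrable_abs_le_const[where B="exp (l / 2 + l\<^sup>2 / 8)"]) (force simp: abs_le_iff)+
  then have "(\<integral>m. F m \<partial>distr P N X) \<in> {1 .. exp (l / 2 + l\<^sup>2 / 8)}"
    using F by (auto intro!: L.integral_ge_const L.integral_le_const AE_I2)
  then have ln_F: "ln (\<integral>m. F m \<partial>distr P N X) \<le> l / 2 + l\<^sup>2 / 8"
    using ln_mono[of _ "exp (l / 2 + l\<^sup>2 / 8)"] by simp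
  have exp_ln: "exp (ln (ref_mgf \<pi> T l a m)) = ref_mgf \<pi> T l a m" if "m \<in> space N" for a m
    by (intro exp_ln less_le_trans[OF zero_less_one ref_mgf_bounds(1)[OF \<pi> that l]])
  have "(\<integral>\<omega>. ln (ref_mgf \<pi> T l (Y \<omega>) (X \<omega>)) \<partial>P) \<le> P.mutual_information (exp 1) N arms_space X Y
      + ln (\<integral>m. (exp (ln (ref_mgf \<pi> T l 1 m)) + exp (ln (ref_mgf \<pi> T l 2 m))) / 2 \<partial>distr P N X)"
    using integral_le_mutual_information[OF measurable_ln_ref_mgf[OF \<pi>, of T l], of l]
      abs_ln_ref_mgf_le[OF \<pi> _ l] by (auto simp: space_pair_measure)
  also have "(\<integral>m. (exp (ln (ref_mgf \<pi> T l 1 m)) + exp (ln (ref_mgf \<pi> T l 2 m))) / 2 \<partial>distr P N X)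
      = (\<integral>m. F m \<partial>distr P N X)"
    using exp_ln by (intro Bochner_Integration.integral_cong) (auto simp: F_def)
  finally have "(\<integral>\<omega>. ln (ref_mgf \<pi> T l (Y \<omega>) (X \<omega>)) \<partial>P)
      \<le> P.mutual_information (exp 1) N arms_space X Y + ln (\<integral>m. F m \<partial>distr P N X)" .
  with ln_F show ?thesis by linarith
qed

lemma (in uniform_arm) pull_frac_le_mutual_information:
  fixes \<nu> :: "nat \<Rightarrow> nat \<Rightarrow> real"
  assumes \<pi>: "policy_measurable N \<pi>" and l: "0 < l" and c: "\<And>a b. (\<nu> a b)\<^sup>2 \<le> c"
  shows "l * (\<integral>\<omega>. (\<integral>h. pull_frac T (Y \<omega>) h \<partial>traj (\<nu> (Y \<omega>)) \<pi> (X \<omega>) T) \<partial>P)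
    \<le> P.mutual_information (exp 1) N arms_space X Y + T * c / 2 + l / 2 + l\<^sup>2 / 8"
proof -
  have X_space: "X \<omega> \<in> space N" if "\<omega> \<in> space P" for \<omega>
    using that by (auto intro: measurable_space)
  note integrable_ln = integrable_ln_ref_mgf[OF \<pi> less_imp_le[OF l]]
  have "l * (\<integral>\<omega>. (\<integral>h. pull_frac T (Y \<omega>) h \<partial>traj (\<nu> (Y \<omega>)) \<pi> (X \<omega>) T) \<partial>P)
      \<le> (\<integral>\<omega>. T * c / 2 + ln (ref_mgf \<pi> T l (Y \<omega>) (X \<omega>)) \<partial>P)"
    using integrable_ln integrable_expected_pull_frac[OF \<pi>] X_space
      expected_pull_frac_le_ln_ref_mgf[OF \<pi> _ less_imp_le[OF l] c]
    by (subst integral_mult_right_zero[symmetric]) (intro integral_mono; auto)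
  also have "\<dots> = T * c / 2 + (\<integral>\<omega>. ln (ref_mgf \<pi> T l (Y \<omega>) (X \<omega>)) \<partial>P)"
    using integrable_ln by (simp add: P.prob_space)
  finally show ?thesis
    using integral_ln_ref_mgf_le[OF \<pi> less_imp_le[OF l], where T=T] by linarith
qed

lemma (in uniform_arm) expected_pull_frac_le:
  fixes \<nu> :: "nat \<Rightarrow> nat \<Rightarrow> real"
  assumes \<pi>: "policy_measurable N \<pi>" and c: "\<And>a b. (\<nu> a b)\<^sup>2 \<le> c"
    and I: "P.mutual_information (exp 1) N arms_space X Y \<le> I" "0 < I"
  shows "(\<integral>\<omega>. (\<integral>h. pull_frac T (Y \<omega>) h \<partial>traj (\<nu> (Y \<omega>)) \<pi> (X \<omega>) T) \<partial>P)
    \<le> 1/2 + sqrt ((I + T * c / 2) / 2)"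
proof (rule le_half_plus_sqrt_of_mgf_bound)
  show "0 < I + T * c / 2" using I(2) order_trans[OF zero_le_power2 c] by (simp add: add_pos_nonneg)
  fix l :: real assume "0 < l"
  with pull_frac_le_mutual_information[where \<nu>=\<nu> and T=T, OF \<pi> this c] I(1)
  show "l * (\<integral>\<omega>. (\<integral>h. pull_frac T (Y \<omega>) h \<partial>traj (\<nu> (Y \<omega>)) \<pi> (X \<omega>) T) \<partial>P)
    \<le> I + T * c / 2 + l / 2 + l\<^sup>2 / 8"
    by linarith
qed

definition arm_means :: "real \<Rightarrow> nat \<Rightarrow> nat \<Rightarrow> real" where
  "arm_means \<Delta> a = (if a = 1 then mu_one \<Delta> else mu_two \<Delta>)"

lemma best_arm_mu_one: "0 < \<Delta> \<Longrightarrow> best_arm (mu_one \<Delta>) = 1"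
  unfolding best_arm_def arg_max_def is_arg_max_def mu_one_def by (rule some_equality) auto

lemma best_arm_mu_two: "0 < \<Delta> \<Longrightarrow> best_arm (mu_two \<Delta>) = 2"
  unfolding best_arm_def arg_max_def is_arg_max_def mu_two_def by (rule some_equality) auto

lemma arm_means_best_arm:
  assumes "0 < \<Delta>" "\<mu> \<in> {mu_one \<Delta>, mu_two \<Delta>}"
  shows "arm_means \<Delta> (best_arm \<mu>) = \<mu>"
  using assms by (auto simp: arm_means_def best_arm_mu_one best_arm_mu_two)

lemma regret_arm_means:
  assumes "0 < \<Delta>" "a \<in> {1, 2}"
  shows "(\<Sum>t<T. Max (arm_means \<Delta> a ` {1, 2}) - arm_means \<Delta> a (fst (h t)))
    = \<Delta> * T * (1 - pull_frac T a h)"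
proof -
  define pulled where "pulled t = (if fst (h t) = 1 then 1 else 0 :: real)" for t
  have "Max (arm_means \<Delta> a ` {1, 2}) - arm_means \<Delta> a (fst (h t))
      = (if a = 1 then \<Delta> - \<Delta> * pulled t else \<Delta> * pulled t)" for t
    using assms by (auto simp: arm_means_def mu_one_def mu_two_def pulled_def)
  then have "(\<Sum>t<T. Max (arm_means \<Delta> a ` {1, 2}) - arm_means \<Delta> a (fst (h t)))
      = (if a = 1 then \<Delta> * T - \<Delta> * (\<Sum>t<T. pulled t) else \<Delta> * (\<Sum>t<T. pulled t))"
    by (simp add: sum_subtractf sum_distrib_left)
  moreover have "pull_frac T a h = (if a = 1 then (\<Sum>t<T. pulled t) / T else 1 - (\<Sum>t<T. pulled t) / T)"
    by (simp add: pull_frac_def Let_def pulled_def)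
  moreover have "real T * ((\<Sum>t<T. pulled t) / T) = (\<Sum>t<T. pulled t)"
    by (cases "T = 0") simp_all
  ultimately show ?thesis by (simp add: algebra_simps)
qed

lemma cond_regret_arm_means:
  assumes "policy_measurable N \<pi>" "m \<in> space N" "0 < \<Delta>" "a \<in> {1, 2}"
  shows "cond_regret \<pi> (arm_means \<Delta> a) m T
    = \<Delta> * T * (1 - (\<integral>h. pull_frac T a h \<partial>traj (arm_means \<Delta> a) \<pi> m T))"
proof -
  interpret Q: prob_space "traj (arm_means \<Delta> a) \<pi> m T" using prob_space_traj[OF assms(1,2)] .
  have "integrable (traj (arm_means \<Delta> a) \<pi> m T) (pull_frac T a)"
    using sets_traj[OF assms(1,2)] pull_frac_bounds[of T a]
    by (intro Q.integrable_abs_le_const[where B=1]) (auto cong: measurable_cong_sets)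
  then show ?thesis
    unfolding cond_regret_def regret_arm_means[OF assms(3,4)]
    by (simp add: Q.prob_space right_diff_distrib)
qed

lemma (in uniform_arm) integral_cond_regret_arm_means:
  assumes \<pi>: "policy_measurable N \<pi>" and \<Delta>: "0 < \<Delta>"
  shows "(\<integral>\<omega>. cond_regret \<pi> (arm_means \<Delta> (Y \<omega>)) (X \<omega>) T \<partial>P)
    = \<Delta> * T * (1 - (\<integral>\<omega>. (\<integral>h. pull_frac T (Y \<omega>) h \<partial>traj (arm_means \<Delta> (Y \<omega>)) \<pi> (X \<omega>) T) \<partial>P))"
proof -
  have "(\<integral>\<omega>. cond_regret \<pi> (arm_means \<Delta> (Y \<omega>)) (X \<omega>) T \<partial>P)
      = (\<integral>\<omega>. \<Delta> * T * (1 - (\<integral>h. pull_frac T (Y \<omega>) h \<partial>traj (arm_means \<Delta> (Y \<omega>)) \<pi> (X \<omega>) T)) \<partial>P)"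
    using cond_regret_arm_means[OF \<pi> measurable_space[OF measurable_X] \<Delta>] Y_in_arms
    by (intro Bochner_Integration.integral_cong) auto
  also have "\<dots> = \<Delta> * T * (1 - (\<integral>\<omega>. (\<integral>h. pull_frac T (Y \<omega>) h \<partial>traj (arm_means \<Delta> (Y \<omega>)) \<pi> (X \<omega>) T) \<partial>P))"
    using integrable_expected_pull_frac[OF \<pi>] by (simp add: P.prob_space right_diff_distrib)
  finally show ?thesis .
qed

lemma uniform_arm_best_arm:
  assumes "prob_space P" and \<Delta>: "0 < \<Delta>"
    and mu: "mu \<in> P \<rightarrow>\<^sub>M count_space {mu_one \<Delta>, mu_two \<Delta>}"
    and prob_1: "measure P {\<omega> \<in> space P. mu \<omega> = mu_one \<Delta>} = 1/2"
    and prob_2: "measure P {\<omega> \<in> space P. mu \<omega> = mu_two \<Delta>} = 1/2"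
    and M: "M \<in> P \<rightarrow>\<^sub>M N"
  shows "uniform_arm P N M (\<lambda>\<omega>. best_arm (mu \<omega>))"
proof -
  have best_arm: "best_arm (mu_one \<Delta>) = 1" "best_arm (mu_two \<Delta>) = 2"
    using best_arm_mu_one[OF \<Delta>] best_arm_mu_two[OF \<Delta>] by simp_all
  have mu_space: "mu \<omega> = mu_one \<Delta> \<or> mu \<omega> = mu_two \<Delta>" if "\<omega> \<in> space P" for \<omega>
    using measurable_space[OF mu that] by simp
  have "mu_one \<Delta> \<noteq> mu_two \<Delta>" using best_arm by force
  then have events: "{\<omega> \<in> space P. best_arm (mu \<omega>) = 1} = {\<omega> \<in> space P. mu \<omega> = mu_one \<Delta>}"
    "{\<omega> \<in> space P. best_arm (mu \<omega>) = 2} = {\<omega> \<in> space P. mu \<omega> = mu_two \<Delta>}"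
    using best_arm by (auto dest: mu_space)
  show ?thesis
  proof (intro uniform_arm.intro[OF assms(1)] uniform_arm_axioms.intro)
    show "(\<lambda>\<omega>. best_arm (mu \<omega>)) \<in> P \<rightarrow>\<^sub>M arms_space"
      by (rule measurable_compose[OF mu]) (auto simp: arms_space_def best_arm)
    show "measure P {\<omega> \<in> space P. best_arm (mu \<omega>) = 1} = 1/2"
      "measure P {\<omega> \<in> space P. best_arm (mu \<omega>) = 2} = 1/2"
      unfolding events using prob_1 prob_2 .
  qed (rule M)
qed

theorem lemma1:
  fixes P :: "'w measure" and N :: "'m measure"
    and mu :: "'w \<Rightarrow> nat \<Rightarrow> real" and M :: "'w \<Rightarrow> 'm"
    and \<pi> :: "'m policy" and \<Delta> :: real and T :: nat
  assumes "prob_space P"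
    and "\<Delta> > 0" and "T \<ge> 1"
    and "mu \<in> P \<rightarrow>\<^sub>M count_space {mu_one \<Delta>, mu_two \<Delta>}"
    and "measure P {\<omega> \<in> space P. mu \<omega> = mu_one \<Delta>} = 1/2"
    and "measure P {\<omega> \<in> space P. mu \<omega> = mu_two \<Delta>} = 1/2"
    and "M \<in> P \<rightarrow>\<^sub>M N"
    and "prob_space.mutual_information P (exp 1) N arms_space M (\<lambda>\<omega>. best_arm (mu \<omega>)) \<le> 1/16"
    and "policy_measurable N \<pi>"
  shows "(\<integral>\<omega>. cond_regret \<pi> (mu \<omega>) (M \<omega>) T \<partial>P)
           \<ge> \<Delta> * T * (1/2 - sqrt (1/2 * (1/16 + 4 * T * \<Delta>^2)))"
proof -
  interpret uniform_arm P N M "\<lambda>\<omega>. best_arm (mu \<omega>)"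
    using uniform_arm_best_arm[OF assms(1,2,4-7)] .
  let ?frac = "\<integral>\<omega>. (\<integral>h. pull_frac T (best_arm (mu \<omega>)) h
    \<partial>traj (arm_means \<Delta> (best_arm (mu \<omega>))) \<pi> (M \<omega>) T) \<partial>P"
  have "arm_means \<Delta> (best_arm (mu \<omega>)) = mu \<omega>" if "\<omega> \<in> space P" for \<omega>
    using arm_means_best_arm[OF assms(2)] measurable_space[OF assms(4) that] by simp
  then have regret: "(\<integral>\<omega>. cond_regret \<pi> (mu \<omega>) (M \<omega>) T \<partial>P) = \<Delta> * T * (1 - ?frac)"
    unfolding integral_cond_regret_arm_means[OF assms(9,2), symmetric]
    by (intro Bochner_Integration.integral_cong) auto
  have "?frac \<le> 1/2 + sqrt ((1/16 + T * \<Delta>\<^sup>2 / 2) / 2)"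
    using assms(8) by (intro expected_pull_frac_le[OF assms(9)])
      (auto simp: arm_means_def mu_one_def mu_two_def)
  moreover have "sqrt ((1/16 + T * \<Delta>\<^sup>2 / 2) / 2) \<le> sqrt (1/2 * (1/16 + 4 * T * \<Delta>^2))"
    using zero_le_mult_iff[of "real T" "\<Delta>\<^sup>2"] by simp
  ultimately have "1/2 - sqrt (1/2 * (1/16 + 4 * T * \<Delta>^2)) \<le> 1 - ?frac"
    by linarith
  then show ?thesis
    unfolding regret by (rule mult_left_mono) (use assms(2) in simp)
qed

end
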